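(* Let $k$ be a field of characteristic two. Let $\alpha\in k[x]\setminus\{0\}$, $\beta\in k[x,y]\setminus\{0\}$, $\gamma\in k[x,y,z,w]$, let $d:=\gcd_{k[x,y]}(\alpha,\beta)$, $a:=\alpha/d$, $b:=\beta/d$, and set $f_1:=x$, $f_2:=y^2+\alpha y$, $f_3:=z^2+\beta(x,\,y^2+\alpha y)\,z$, $f_4:=az+b(x,\,y^2+\alpha y)\,y$. Let $T$ be the $k$-algebra automorphism of $k[x,y,z,w]$ given by $T(x)=x$, $T(y)=y+\alpha(f_1)$, $T(z)=z+\beta(f_1,f_2)$, $T(w)=w+\gamma(f_1,f_2,f_3,f_4)$. Then $$k[x,y,z]^T = k[f_1,f_2,f_3,f_4].$$
   Context: For a $k$-subalgebra $S$ of $k[x,y,z,w]$ and an automorphism $\sigma$ of $k[x,y,z,w]$, $S^\sigma:=\{f\in S\mid \sigma(f)=f\}$. Notation such as $\beta(x,\,y^2+\alpha y)$ means substituting the given polynomials for the two variables of $\beta$. The gcd is taken in $k[x,y]$ (any choice up to a unit). *)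

theory Defs
  imports "HOL-Computational_Algebra.Computational_Algebra"
begin

text \<open>Multivariate polynomial rings as iterated univariate ones:
  k[x] = 'a poly, k[x,y] = 'a poly poly, k[x,y,z] = 'a poly poly poly,
  k[x,y,z,w] = 'a poly poly poly poly (x innermost, w outermost).\<close>

type_synonym 'a R4 = "'a poly poly poly poly"

definition peval :: "('a::zero \<Rightarrow> 'b::comm_semiring_1) \<Rightarrow> 'a poly \<Rightarrow> 'b \<Rightarrow> 'b" where
  "peval h p v = (\<Sum>i\<le>degree p. h (coeff p i) * v ^ i)"

definition const4 :: "'a::zero \<Rightarrow> 'a R4" where
  "const4 c = [:[:[:[:c:]:]:]:]"

definition subst4 :: "'a::comm_ring_1 R4 \<Rightarrow> 'a R4 \<Rightarrow> 'a R4 \<Rightarrow> 'a R4 \<Rightarrow> 'a R4 \<Rightarrow> 'a R4" where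
  "subst4 f p1 p2 p3 p4 =
     peval (\<lambda>g. peval (\<lambda>h. peval (\<lambda>q. peval const4 q p1) h p2) g p3) f p4"

definition lift1 :: "'a::zero poly \<Rightarrow> 'a R4" where "lift1 p = [:[:[:p:]:]:]"
definition lift2 :: "'a::zero poly poly \<Rightarrow> 'a R4" where "lift2 p = [:[:p:]:]"
definition lift3 :: "'a::zero poly poly poly \<Rightarrow> 'a R4" where "lift3 p = [:p:]"

definition varX :: "'a::comm_ring_1 R4" where "varX = [:[:[:[:0,1:]:]:]:]"
definition varY :: "'a::comm_ring_1 R4" where "varY = [:[:[:0,1:]:]:]"
definition varZ :: "'a::comm_ring_1 R4" where "varZ = [:[:0,1:]:]"
definition varW :: "'a::comm_ring_1 R4" where "varW = [:0,1:]"

definition gen_alg4 :: "'a::comm_ring_1 R4 \<Rightarrow> 'a R4 \<Rightarrow> 'a R4 \<Rightarrow> 'a R4 \<Rightarrow> 'a R4 set" where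
  "gen_alg4 g1 g2 g3 g4 = {subst4 p g1 g2 g3 g4 | p. True}"

definition kxyz :: "'a::comm_ring_1 R4 set" where "kxyz = range lift3"

definition subst_xy :: "'a::comm_ring_1 poly poly \<Rightarrow> 'a R4 \<Rightarrow> 'a R4" where
  "subst_xy \<beta> q = subst4 (lift2 \<beta>) varX q varZ varW"

end

theory Submission
  imports Defs
begin

text \<open>
  Write k[x,y,z] = B[z] with B = k[x][y]. Over a domain, a polynomial ring is free over the
  subring generated by a monic quadratic g, with basis 1, y: every p is uniquely P(g) + y Q(g).
  In characteristic 2 the shift y \<mapsto> y + c fixes g = y^2 + c y, so on this decomposition it
  acts coefficient-wise. For B and y \<mapsto> y + \<alpha> this gives B^T = k[x][f2]. For B[z] and
  z \<mapsto> z + \<beta>(x,f2), an invariant is a sum of terms (p_i + z q_i) f3^i with q_i in k[x][f2] and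
  p_i - T p_i = \<beta>(x,f2) q_i. Writing p_i = U(f2) + y V(f2) and q_i = Q(f2), the latter says
  \<alpha> V = \<beta> Q, i.e. a V = b Q with a, b coprime, so Q = a R, V = b R and
  p_i + z q_i = U(f2) + R(f2) f4. Conversely f1, ..., f4 are invariant, and T is a ring
  homomorphism fixing k.
\<close>

section \<open>Ring homomorphisms of polynomial rings\<close>

definition is_ring_hom :: "('b::ring \<Rightarrow> 'c::ring) \<Rightarrow> bool" where
  "is_ring_hom f \<longleftrightarrow> (\<forall>p q. f (p + q) = f p + f q) \<and> (\<forall>p q. f (p * q) = f p * f q)"

lemma is_ring_homD:
  assumes "is_ring_hom f"
  shows "f (p + q) = f p + f q" and "f (p * q) = f p * f q"
  using assms by (auto simp: is_ring_hom_def)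

lemma is_ring_hom_0: "is_ring_hom f \<Longrightarrow> f 0 = 0"
  using is_ring_homD(1)[of f 0 0] by simp

lemma is_ring_hom_comp: "is_ring_hom f \<Longrightarrow> is_ring_hom g \<Longrightarrow> is_ring_hom (\<lambda>x. f (g x))"
  by (simp add: is_ring_hom_def)

lemma is_ring_hom_sum: "is_ring_hom f \<Longrightarrow> f (sum g A) = (\<Sum>i\<in>A. f (g i))"
  by (induct A rule: infinite_finite_induct) (auto simp: is_ring_hom_0 is_ring_homD)

lemma is_ring_hom_poly: "is_ring_hom (\<lambda>p. poly p (v::'b::comm_ring_1))"
  by (simp add: is_ring_hom_def)

lemma is_ring_hom_pcompose: "is_ring_hom (\<lambda>p. pcompose p (q::'b::comm_ring_1 poly))"
  by (simp add: is_ring_hom_def pcompose_add pcompose_mult)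

lemma is_ring_hom_map_poly:
  fixes h :: "'b::comm_ring_1 \<Rightarrow> 'c::comm_ring_1"
  assumes h: "is_ring_hom h"
  shows "is_ring_hom (map_poly h)"
proof -
  have h0: "h 0 = 0" using is_ring_hom_0[OF h] .
  have "map_poly h (p + q) = map_poly h p + map_poly h q" for p q
    by (rule poly_eqI) (simp add: coeff_map_poly h0 is_ring_homD[OF h])
  moreover have "map_poly h (p * q) = map_poly h p * map_poly h q" for p q
    by (rule poly_eqI)
      (simp add: coeff_map_poly h0 is_ring_homD[OF h] coeff_mult is_ring_hom_sum[OF h])
  ultimately show ?thesis by (simp add: is_ring_hom_def)
qed

lemma poly_generated_induct [case_names const X add mult]:
  fixes P :: "'b::comm_ring_1 poly \<Rightarrow> bool"
  assumes "\<And>c. P [:c:]" "P [:0, 1:]"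
    and "\<And>p q. P p \<Longrightarrow> P q \<Longrightarrow> P (p + q)" "\<And>p q. P p \<Longrightarrow> P q \<Longrightarrow> P (p * q)"
  shows "P p"
proof (induct p)
  case 0
  then show ?case using assms(1)[of 0] by simp
next
  case (pCons a p)
  have "pCons a p = [:a:] + [:0, 1:] * p" by simp
  then show ?case using assms pCons by metis
qed

lemma is_ring_hom_poly_eqI:
  fixes \<phi> \<psi> :: "'b::comm_ring_1 poly \<Rightarrow> 'c::comm_ring_1"
  assumes "is_ring_hom \<phi>" "is_ring_hom \<psi>" "\<And>c. \<phi> [:c:] = \<psi> [:c:]" "\<phi> [:0, 1:] = \<psi> [:0, 1:]"
  shows "\<phi> p = \<psi> p"
  by (induct p rule: poly_generated_induct) (use assms in \<open>auto simp: is_ring_homD\<close>)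

lemma map_poly_pcompose:
  fixes h :: "'b::comm_ring_1 \<Rightarrow> 'c::comm_ring_1"
  assumes h: "is_ring_hom h"
  shows "map_poly h (pcompose p g) = pcompose (map_poly h p) (map_poly h g)"
proof (induct p)
  case (pCons a p)
  have h0: "h 0 = 0" using is_ring_hom_0[OF h] .
  then show ?case using pCons
    by (simp add: pcompose_pCons is_ring_homD[OF is_ring_hom_map_poly[OF h]] map_poly_pCons)
qed simp

lemma peval_eq_poly_map_poly:
  assumes "h 0 = 0"
  shows "peval h p v = poly (map_poly h p) v"
proof -
  have "poly (map_poly h p) v = (\<Sum>i\<le>degree (map_poly h p). coeff (map_poly h p) i * v ^ i)"
    by (rule poly_altdef)
  also have "\<dots> = (\<Sum>i\<le>degree p. coeff (map_poly h p) i * v ^ i)"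
    by (rule sum.mono_neutral_left) (use map_poly_degree_leq[of h p] in \<open>auto simp: coeff_eq_0\<close>)
  also have "\<dots> = peval h p v"
    by (simp add: peval_def coeff_map_poly assms)
  finally show ?thesis by simp
qed

lemma is_ring_hom_peval:
  fixes h :: "'b::comm_ring_1 \<Rightarrow> 'c::comm_ring_1"
  assumes h: "is_ring_hom h"
  shows "is_ring_hom (\<lambda>p. peval h p v)"
  using is_ring_hom_comp[OF is_ring_hom_poly is_ring_hom_map_poly[OF h]]
  by (simp add: peval_eq_poly_map_poly is_ring_hom_0[OF h])

lemma peval_const [simp]: "peval h [:c:] v = h c"
  by (simp add: peval_def)

lemma peval_1: "peval h 1 v = h 1"
  by (simp add: peval_def)

lemma peval_X:
  fixes h :: "'b::zero_neq_one \<Rightarrow> 'c::comm_semiring_1"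
  assumes "h 0 = 0" "h 1 = 1"
  shows "peval h [:0, 1:] v = v"
  using assms by (simp add: peval_def)

section \<open>Polynomials over a monic quadratic\<close>

lemma poly_degree_less_2:
  fixes p :: "'b::comm_ring_1 poly"
  assumes "degree p < 2"
  shows "p = [:coeff p 0:] + [:0, 1:] * [:coeff p 1:]"
proof (rule poly_eqI)
  fix n
  show "coeff p n = coeff ([:coeff p 0:] + [:0, 1:] * [:coeff p 1:]) n"
    using assms by (cases n; cases "n - 1") (auto simp: coeff_eq_0)
qed

lemma pcompose_quadratic_decomposition:
  fixes g :: "'b::idom poly"
  assumes g: "degree g = 2" "lead_coeff g = 1"
  shows "\<exists>P Q. p = pcompose P g + [:0, 1:] * pcompose Q g"
proof (induct "degree p" arbitrary: p rule: less_induct)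
  case less
  show ?case
  proof (cases "degree p < 2")
    case True
    then show ?thesis using poly_degree_less_2 by (metis pcompose_const)
  next
    case False
    obtain q r where qr: "pseudo_divmod p g = (q, r)" by fastforce
    have g0: "g \<noteq> 0" using g by auto
    from pseudo_divmod[OF g0 qr] g have p: "p = g * q + r" and r: "degree r < 2"
      by auto
    have "degree q < degree p"
    proof (cases "q = 0")
      case False
      have "degree (g * q) = 2 + degree q" using degree_mult_eq[OF g0 False] g by simp
      moreover have "degree p = degree (g * q)"
        using p degree_add_eq_left[of r "g * q"] r calculation by simp
      ultimately show ?thesis by simp
    qed (use False in simp)
    then obtain P Q where PQ: "q = pcompose P g + [:0, 1:] * pcompose Q g"
      using less by blast
    have "p = pcompose (pCons (coeff r 0) P) g + [:0, 1:] * pcompose (pCons (coeff r 1) Q) g"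
      by (subst p, subst poly_degree_less_2[OF r], subst PQ) (simp add: pcompose_pCons algebra_simps)
    then show ?thesis by blast
  qed
qed

lemma pcompose_quadratic_decomposition_unique:
  fixes g :: "'b::idom poly"
  assumes g: "degree g = 2"
    and eq: "pcompose P g + [:0, 1:] * pcompose Q g = pcompose P' g + [:0, 1:] * pcompose Q' g"
  shows "P = P' \<and> Q = Q'"
proof -
  have eq0: "pcompose (P - P') g = - ([:0, 1:] * pcompose (Q - Q') g)"
    using eq unfolding pcompose_diff by algebra
  have "Q = Q'"
  proof (rule ccontr)
    assume "Q \<noteq> Q'"
    then have "pcompose (Q - Q') g \<noteq> 0" using pcompose_eq_0[of "Q - Q'" g] g by auto
    then have "degree ([:0, 1:] * pcompose (Q - Q') g) = 1 + 2 * degree (Q - Q')"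
      using degree_mult_eq[of "[:0, 1:]"] degree_pcompose[of "Q - Q'" g] g by simp
    moreover have "degree (pcompose (P - P') g) = 2 * degree (P - P')"
      using degree_pcompose[of "P - P'" g] g by simp
    moreover have "degree (pcompose (P - P') g) = degree ([:0, 1:] * pcompose (Q - Q') g)"
      unfolding eq0 by (rule degree_minus)
    ultimately show False by presburger
  qed
  then have "pcompose (P - P') g = 0" using eq0 by simp
  then show ?thesis using pcompose_eq_0[of "P - P'" g] g \<open>Q = Q'\<close> by auto
qed

lemma add_self_CHAR_2:
  assumes "CHAR('b::ring_1) = 2"
  shows "(x::'b) + x = 0"
  using minus_CHAR_2[OF assms, of x x] by simp

lemma pcompose_quadratic_shift:
  fixes c :: "'b::comm_ring_1"
  assumes "CHAR('b) = 2"
  shows "pcompose [:0, c, 1:] [:c, 1:] = [:0, c, 1:]"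
proof -
  have "pcompose [:0, c, 1:] [:c, 1:] = [:0, c, 1:] + [:c * c + c * c, c + c:]"
    by (simp add: pcompose_pCons algebra_simps)
  then show ?thesis by (simp add: add_self_CHAR_2[OF assms])
qed

text \<open>The shift fixes g = y^2 + c y, so it acts on p = P(g) + y Q(g) through the coefficients
  of P and Q, with y \<mapsto> y + c producing the extra term c Q.\<close>

lemma shift_fixed_decomposition:
  fixes \<sigma> :: "'b::idom \<Rightarrow> 'b" and c :: 'b
  assumes char: "CHAR('b) = 2" and \<sigma>: "is_ring_hom \<sigma>" "\<sigma> 1 = 1" "\<sigma> c = c"
    and fixed: "pcompose (map_poly \<sigma> p) [:c, 1:] = p"
  obtains P Q where "p = pcompose P [:0, c, 1:] + [:0, 1:] * pcompose Q [:0, c, 1:]"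
    and "map_poly \<sigma> Q = Q" and "P = map_poly \<sigma> P + smult c Q"
proof -
  let ?g = "[:0, c, 1:]" and ?s = "\<lambda>p. pcompose (map_poly \<sigma> p) [:c, 1:]"
  have hom: "is_ring_hom ?s"
    by (rule is_ring_hom_comp[OF is_ring_hom_pcompose is_ring_hom_map_poly[OF \<sigma>(1)]])
  have \<sigma>0: "\<sigma> 0 = 0" by (rule is_ring_hom_0[OF \<sigma>(1)])
  have "map_poly \<sigma> ?g = ?g" using \<sigma> \<sigma>0 by (simp add: map_poly_pCons)
  then have s_comp: "?s (pcompose P ?g) = pcompose (map_poly \<sigma> P) ?g" for P
    by (simp add: map_poly_pcompose[OF \<sigma>(1)] pcompose_assoc[symmetric]
        pcompose_quadratic_shift[OF char])
  have s_X: "?s [:0, 1:] = [:c:] + [:0, 1:]"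
    using \<sigma> \<sigma>0 by (simp add: map_poly_pCons pcompose_pCons)
  obtain P Q where p: "p = pcompose P ?g + [:0, 1:] * pcompose Q ?g"
    using pcompose_quadratic_decomposition[of ?g p] by auto
  have "pcompose P ?g + [:0, 1:] * pcompose Q ?g = ?s p"
    using fixed p by simp
  also have "?s p = pcompose (map_poly \<sigma> P + smult c (map_poly \<sigma> Q)) ?g
      + [:0, 1:] * pcompose (map_poly \<sigma> Q) ?g"
    unfolding p is_ring_homD[OF hom] s_comp s_X
    by (simp add: pcompose_add pcompose_smult algebra_simps)
  finally have "P = map_poly \<sigma> P + smult c (map_poly \<sigma> Q) \<and> Q = map_poly \<sigma> Q"
    by (rule pcompose_quadratic_decomposition_unique[rotated]) simp
  with p show thesis by (intro that) auto
qed

lemma shift_fixed_imp_pcompose: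
  fixes c :: "'b::idom"
  assumes "CHAR('b) = 2" "c \<noteq> 0" and fixed: "pcompose p [:c, 1:] = p"
  shows "\<exists>P. p = pcompose P [:0, c, 1:]"
proof -
  have "is_ring_hom (id :: 'b \<Rightarrow> 'b)" by (simp add: is_ring_hom_def)
  then obtain P Q where "p = pcompose P [:0, c, 1:] + [:0, 1:] * pcompose Q [:0, c, 1:]"
      and "P = P + smult c Q"
    using shift_fixed_decomposition[of id c p] assms by auto
  then show ?thesis using \<open>c \<noteq> 0\<close> by auto
qed

lemma pcompose_quadratic_mem:
  fixes S :: "'b::comm_ring_1 poly set"
  assumes S: "0 \<in> S" "g \<in> S" "\<And>p q. p \<in> S \<Longrightarrow> q \<in> S \<Longrightarrow> p + q \<in> S"
      "\<And>p q. p \<in> S \<Longrightarrow> q \<in> S \<Longrightarrow> p * q \<in> S"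
    and coeffs: "\<And>i. [:coeff P i:] + [:0, 1:] * [:coeff Q i:] \<in> S"
  shows "pcompose P g + [:0, 1:] * pcompose Q g \<in> S"
  using coeffs
proof (induction P Q rule: poly_induct2)
  case (pCons a P b Q)
  have "pcompose (pCons a P) g + [:0, 1:] * pcompose (pCons b Q) g
      = ([:a:] + [:0, 1:] * [:b:]) + g * (pcompose P g + [:0, 1:] * pcompose Q g)"
    by (simp add: pcompose_pCons algebra_simps)
  moreover have "[:a:] + [:0, 1:] * [:b:] \<in> S" using pCons.prems[of 0] by simp
  moreover have "pcompose P g + [:0, 1:] * pcompose Q g \<in> S"
    using pCons.IH pCons.prems[of "Suc _"] by simp
  ultimately show ?case using S by simp
qed (use S in simp)

section \<open>Evaluation and substitution in k[x,y,z,w]\<close>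

definition eval_x :: "'a::comm_ring_1 R4 \<Rightarrow> 'a poly \<Rightarrow> 'a R4" where
  "eval_x v1 q = peval const4 q v1"

definition eval_xy :: "'a::comm_ring_1 R4 \<Rightarrow> 'a R4 \<Rightarrow> 'a poly poly \<Rightarrow> 'a R4" where
  "eval_xy v1 v2 h = peval (eval_x v1) h v2"

definition eval_xyz :: "'a::comm_ring_1 R4 \<Rightarrow> 'a R4 \<Rightarrow> 'a R4 \<Rightarrow> 'a poly poly poly \<Rightarrow> 'a R4" where
  "eval_xyz v1 v2 v3 g = peval (eval_xy v1 v2) g v3"

lemma subst4_eq_peval: "subst4 f v1 v2 v3 v4 = peval (eval_xyz v1 v2 v3) f v4"
  by (simp add: subst4_def eval_xyz_def[abs_def] eval_xy_def[abs_def] eval_x_def[abs_def])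

lemma is_ring_hom_const4: "is_ring_hom (const4 :: 'a::comm_ring_1 \<Rightarrow> 'a R4)"
  by (simp add: is_ring_hom_def const4_def)

lemma is_ring_hom_eval_x: "is_ring_hom (eval_x v1)"
  unfolding eval_x_def[abs_def] by (rule is_ring_hom_peval[OF is_ring_hom_const4])

lemma is_ring_hom_eval_xy: "is_ring_hom (eval_xy v1 v2)"
  unfolding eval_xy_def[abs_def] by (rule is_ring_hom_peval[OF is_ring_hom_eval_x])

lemma is_ring_hom_eval_xyz: "is_ring_hom (eval_xyz v1 v2 v3)"
  unfolding eval_xyz_def[abs_def] by (rule is_ring_hom_peval[OF is_ring_hom_eval_xy])

lemma is_ring_hom_subst4: "is_ring_hom (\<lambda>f. subst4 f v1 v2 v3 v4)"
  unfolding subst4_eq_peval by (rule is_ring_hom_peval[OF is_ring_hom_eval_xyz])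

lemma is_ring_hom_lift1: "is_ring_hom (lift1 :: 'a::comm_ring_1 poly \<Rightarrow> 'a R4)"
  and is_ring_hom_lift2: "is_ring_hom (lift2 :: 'a::comm_ring_1 poly poly \<Rightarrow> 'a R4)"
  and is_ring_hom_lift3: "is_ring_hom (lift3 :: 'a::comm_ring_1 poly poly poly \<Rightarrow> 'a R4)"
  by (simp_all add: is_ring_hom_def lift1_def lift2_def lift3_def)

lemma lift2_const: "lift2 [:c:] = lift1 c"
  and lift3_const: "lift3 [:e:] = lift2 e"
  and lift1_X: "lift1 [:0, 1:] = varX"
  and lift2_X: "lift2 [:0, 1:] = varY"
  and lift3_X: "lift3 [:0, 1:] = varZ"
  by (simp_all add: lift1_def lift2_def lift3_def varX_def varY_def varZ_def)

lemma lift1_1: "lift1 1 = 1" and lift2_1: "lift2 1 = 1"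
  by (simp_all add: lift1_def lift2_def pCons_one)

lemma const4_eq_lift3: "const4 c = lift3 [:[:[:c:]:]:]"
  by (simp add: const4_def lift3_def)

lemma const4_0: "const4 0 = 0" and const4_1: "const4 1 = 1"
  by (simp_all add: const4_def pCons_one)

lemma eval_x_1: "eval_x v1 1 = 1"
  by (simp add: eval_x_def peval_1 const4_1)

lemma eval_xy_1: "eval_xy v1 v2 1 = 1"
  by (simp add: eval_xy_def peval_1 eval_x_1)

lemma eval_xyz_1: "eval_xyz v1 v2 v3 1 = 1"
  by (simp add: eval_xyz_def peval_1 eval_xy_1)

lemma eval_x_X: "eval_x v1 [:0, 1:] = v1"
  unfolding eval_x_def by (rule peval_X) (simp_all add: const4_0 const4_1)

lemma eval_xy_X: "eval_xy v1 v2 [:0, 1:] = v2"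
  unfolding eval_xy_def by (rule peval_X) (simp_all add: is_ring_hom_0[OF is_ring_hom_eval_x] eval_x_1)

lemma eval_xyz_X: "eval_xyz v1 v2 v3 [:0, 1:] = v3"
  unfolding eval_xyz_def by (rule peval_X) (simp_all add: is_ring_hom_0[OF is_ring_hom_eval_xy] eval_xy_1)

lemma subst4_lift1: "subst4 (lift1 q) v1 v2 v3 v4 = eval_x v1 q"
  and subst4_lift2: "subst4 (lift2 h) v1 v2 v3 v4 = eval_xy v1 v2 h"
  and subst4_lift3: "subst4 (lift3 g) v1 v2 v3 v4 = eval_xyz v1 v2 v3 g"
  by (simp_all add: subst4_eq_peval lift1_def lift2_def lift3_def eval_xyz_def eval_xy_def)

lemma subst4_const4: "subst4 (const4 c) v1 v2 v3 v4 = const4 c"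
  by (simp add: subst4_eq_peval const4_def eval_xyz_def eval_xy_def eval_x_def)

lemma subst4_varX: "subst4 varX v1 v2 v3 v4 = v1"
  by (simp add: lift1_X[symmetric] subst4_lift1 eval_x_X)

lemma subst4_varY: "subst4 varY v1 v2 v3 v4 = v2"
  by (simp add: lift2_X[symmetric] subst4_lift2 eval_xy_X)

lemma subst4_varZ: "subst4 varZ v1 v2 v3 v4 = v3"
  by (simp add: lift3_X[symmetric] subst4_lift3 eval_xyz_X)

lemma subst4_varW: "subst4 varW v1 v2 v3 v4 = v4"
  unfolding subst4_eq_peval varW_def
  by (rule peval_X) (simp_all add: is_ring_hom_0[OF is_ring_hom_eval_xyz] eval_xyz_1)

lemma R4_generated_induct [case_names const varX varY varZ varW add mult]:
  fixes P :: "'a::comm_ring_1 R4 \<Rightarrow> bool"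
  assumes constants: "\<And>c. P (const4 c)"
    and vars: "P varX" "P varY" "P varZ" "P varW"
    and add: "\<And>p q. P p \<Longrightarrow> P q \<Longrightarrow> P (p + q)" and mult: "\<And>p q. P p \<Longrightarrow> P q \<Longrightarrow> P (p * q)"
  shows "P f"
proof -
  have lift1: "P (lift1 e)" for e
  proof (induct e rule: poly_generated_induct)
    case (const c)
    then show ?case using constants[of c] by (simp add: lift1_def const4_def)
  qed (use vars add mult in \<open>simp_all add: lift1_X is_ring_homD[OF is_ring_hom_lift1]\<close>)
  have lift2: "P (lift2 e)" for e
    by (induct e rule: poly_generated_induct)
      (use lift1 vars add mult in \<open>simp_all add: lift2_const lift2_X is_ring_homD[OF is_ring_hom_lift2]\<close>)
  have lift3: "P (lift3 e)" for e
    by (induct e rule: poly_generated_induct)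
      (use lift2 vars add mult in \<open>simp_all add: lift3_const lift3_X is_ring_homD[OF is_ring_hom_lift3]\<close>)
  show ?thesis
  proof (induct f rule: poly_generated_induct)
    case (const c)
    then show ?case using lift3[of c] by (simp add: lift3_def)
  qed (use vars add mult in \<open>simp_all add: varW_def\<close>)
qed

lemma gen_alg4_subst4I: "subst4 p g1 g2 g3 g4 \<in> gen_alg4 g1 g2 g3 g4"
  by (auto simp: gen_alg4_def)

lemma gen_alg4_const: "const4 c \<in> gen_alg4 g1 g2 g3 g4"
  using gen_alg4_subst4I[of "const4 c"] by (simp add: subst4_const4)

lemma gen_alg4_gens: "g1 \<in> gen_alg4 g1 g2 g3 g4" "g2 \<in> gen_alg4 g1 g2 g3 g4"
    "g3 \<in> gen_alg4 g1 g2 g3 g4" "g4 \<in> gen_alg4 g1 g2 g3 g4"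
  using gen_alg4_subst4I[of varX] gen_alg4_subst4I[of varY] gen_alg4_subst4I[of varZ]
    gen_alg4_subst4I[of varW]
  by (simp_all add: subst4_varX subst4_varY subst4_varZ subst4_varW)

lemma gen_alg4_add_mult:
  assumes "p \<in> gen_alg4 g1 g2 g3 g4" "q \<in> gen_alg4 g1 g2 g3 g4"
  shows gen_alg4_add: "p + q \<in> gen_alg4 g1 g2 g3 g4"
    and gen_alg4_mult: "p * q \<in> gen_alg4 g1 g2 g3 g4"
  using assms unfolding gen_alg4_def using is_ring_homD[OF is_ring_hom_subst4, symmetric] by blast+

lemma gen_alg4_subset:
  assumes "\<And>c. const4 c \<in> S" "g1 \<in> S" "g2 \<in> S" "g3 \<in> S" "g4 \<in> S"
    and "\<And>p q. p \<in> S \<Longrightarrow> q \<in> S \<Longrightarrow> p + q \<in> S" "\<And>p q. p \<in> S \<Longrightarrow> q \<in> S \<Longrightarrow> p * q \<in> S"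
  shows "gen_alg4 g1 g2 g3 g4 \<subseteq> S"
proof
  fix f assume "f \<in> gen_alg4 g1 g2 g3 g4"
  then obtain p where f: "f = subst4 p g1 g2 g3 g4" by (auto simp: gen_alg4_def)
  have "subst4 p g1 g2 g3 g4 \<in> S"
    by (induct p rule: R4_generated_induct)
      (use assms in \<open>simp_all add: subst4_const4 subst4_varX subst4_varY subst4_varZ subst4_varW
        is_ring_homD[OF is_ring_hom_subst4]\<close>)
  then show "f \<in> S" using f by simp
qed

lemma eval_x_varX: "eval_x varX e = lift1 e"
  by (rule is_ring_hom_poly_eqI[OF is_ring_hom_eval_x is_ring_hom_lift1])
    (simp_all add: eval_x_def lift1_def const4_def eval_x_X[unfolded eval_x_def] lift1_X[unfolded lift1_def])

lemma peval_lift1_lift2: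
  fixes e :: "'a::comm_ring_1 poly poly"
  shows "peval lift1 e (lift2 g) = lift2 (pcompose e g)"
  by (rule is_ring_hom_poly_eqI[where \<phi> = "\<lambda>e. peval lift1 e (lift2 g)"
        and \<psi> = "\<lambda>e. lift2 (pcompose e g)", OF is_ring_hom_peval[OF is_ring_hom_lift1]
        is_ring_hom_comp[OF is_ring_hom_lift2 is_ring_hom_pcompose]])
    (simp_all add: lift2_const peval_X is_ring_hom_0[OF is_ring_hom_lift1] lift1_1 pcompose_pCons)

lemma peval_lift2_lift3:
  fixes \<sigma> :: "'a::comm_ring_1 poly poly \<Rightarrow> 'a poly poly"
  assumes \<sigma>: "is_ring_hom \<sigma>" "\<sigma> 1 = 1"
  shows "peval (\<lambda>h. lift2 (\<sigma> h)) e (lift3 g) = lift3 (pcompose (map_poly \<sigma> e) g)"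
proof (rule is_ring_hom_poly_eqI[where \<phi> = "\<lambda>e. peval (\<lambda>h. lift2 (\<sigma> h)) e (lift3 g)"
      and \<psi> = "\<lambda>e. lift3 (pcompose (map_poly \<sigma> e) g)"])
  show "is_ring_hom (\<lambda>e. peval (\<lambda>h. lift2 (\<sigma> h)) e (lift3 g))"
    by (rule is_ring_hom_peval[OF is_ring_hom_comp[OF is_ring_hom_lift2 \<sigma>(1)]])
  show "is_ring_hom (\<lambda>e. lift3 (pcompose (map_poly \<sigma> e) g))"
    by (rule is_ring_hom_comp[OF is_ring_hom_lift3
          is_ring_hom_comp[OF is_ring_hom_pcompose is_ring_hom_map_poly[OF \<sigma>(1)]]])
qed (use \<sigma> is_ring_hom_0[OF \<sigma>(1)] in \<open>simp_all add: lift3_const map_poly_pCons peval_X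
      is_ring_hom_0[OF is_ring_hom_lift2] lift2_1 pcompose_pCons\<close>)

lemma subst_xy_lift2: "subst_xy e (lift2 g) = lift2 (pcompose e g)"
  by (simp add: subst_xy_def subst4_lift2 eval_xy_def eval_x_varX[abs_def] peval_lift1_lift2)

lemma subst4_shift_lift3:
  "subst4 (lift3 e) varX (lift2 [:c, 1:]) (lift3 g) v4
     = lift3 (pcompose (map_poly (\<lambda>h. pcompose h [:c, 1:]) e) g)"
proof -
  have "eval_xy varX (lift2 [:c, 1:]) = (\<lambda>h. lift2 (pcompose h [:c, 1:]))"
    by (simp add: eval_xy_def[abs_def] eval_x_varX[abs_def] peval_lift1_lift2)
  then show ?thesis
    by (simp add: subst4_lift3 eval_xyz_def peval_lift2_lift3 is_ring_hom_pcompose pcompose_1)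
qed

lemma kxyz_add: "p \<in> kxyz \<Longrightarrow> q \<in> kxyz \<Longrightarrow> p + q \<in> kxyz"
  and kxyz_mult: "p \<in> kxyz \<Longrightarrow> q \<in> kxyz \<Longrightarrow> p * q \<in> kxyz"
  by (auto simp: kxyz_def is_ring_homD[OF is_ring_hom_lift3, symmetric])

lemma gcd_cofactor_solution:
  fixes a b :: "'b::ring_gcd"
  assumes "a \<noteq> 0" and eq: "a * v = b * q"
  obtains r where "q = (a div gcd a b) * r" and "v = (b div gcd a b) * r"
proof -
  let ?d = "gcd a b"
  let ?a = "a div ?d" and ?b = "b div ?d"
  have d: "?d \<noteq> 0" "a = ?a * ?d" "b = ?b * ?d" using assms(1) by simp_all
  then have "?d * (?a * v) = ?d * (?b * q)" using eq by (metis mult.assoc mult.commute)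
  then have eq': "?a * v = ?b * q" using d(1) by (simp only: mult_cancel_left) simp
  then have "?a dvd q"
    using div_gcd_coprime[of a b] assms(1) by (metis coprime_dvd_mult_right_iff dvd_triv_left)
  then obtain r where q: "q = ?a * r" by blast
  have "?a \<noteq> 0" using d(2) assms(1) by (metis mult_zero_left)
  then have "v = ?b * r" using eq' q by (simp add: mult.left_commute)
  with q show thesis by (rule that)
qed

section \<open>The invariant ring\<close>

text \<open>Everything is computed in k[x][y][z] = \<open>'a poly poly poly\<close> and transported by
  \<open>lift3\<close>: \<open>f2_poly\<close>, \<open>f3_poly\<close>, \<open>f4_poly\<close> encode f2, f3, f4, \<open>\<beta>2\<close> is
  \<beta>(x, f2), \<open>a_cof\<close> and \<open>b_cof\<close> are a and b, and \<open>shift_y\<close>, \<open>shift_yz\<close> are T on k[x,y]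
  and on k[x,y,z].\<close>

locale char2_triangular =
  fixes \<alpha> :: "'a::field_gcd poly" and \<beta> :: "'a poly poly"
  assumes char: "CHAR('a) = 2" and \<alpha>_nonzero: "\<alpha> \<noteq> 0" and \<beta>_nonzero: "\<beta> \<noteq> 0"
begin

definition shift_y :: "'a poly poly \<Rightarrow> 'a poly poly" where
  "shift_y p = pcompose p [:\<alpha>, 1:]"

definition f2_poly :: "'a poly poly" where
  "f2_poly = [:0, \<alpha>, 1:]"

definition \<beta>2 :: "'a poly poly" where
  "\<beta>2 = pcompose \<beta> f2_poly"

definition shift_yz :: "'a poly poly poly \<Rightarrow> 'a poly poly poly" where
  "shift_yz p = pcompose (map_poly shift_y p) [:\<beta>2, 1:]"

definition f3_poly :: "'a poly poly poly" where
  "f3_poly = [:0, \<beta>2, 1:]"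

definition a_cof :: "'a poly poly" where
  "a_cof = [:\<alpha>:] div gcd [:\<alpha>:] \<beta>"

definition b_cof :: "'a poly poly" where
  "b_cof = \<beta> div gcd [:\<alpha>:] \<beta>"

definition f4_poly :: "'a poly poly poly" where
  "f4_poly = [:[:0, 1:] * pcompose b_cof f2_poly, a_cof:]"

abbreviation invariant_alg :: "'a R4 set" where
  "invariant_alg \<equiv> gen_alg4 varX (lift2 f2_poly) (lift3 f3_poly) (lift3 f4_poly)"

lemma shift_y_0 [simp]: "shift_y 0 = 0"
  by (simp add: shift_y_def)

lemma is_ring_hom_shift_y: "is_ring_hom shift_y"
  unfolding shift_y_def[abs_def] by (rule is_ring_hom_pcompose)

lemma shift_y_1: "shift_y 1 = 1"
  by (simp add: shift_y_def pcompose_1)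

lemma shift_y_X: "shift_y [:0, 1:] = [:\<alpha>:] + [:0, 1:]"
  by (simp add: shift_y_def pcompose_pCons)

lemma shift_y_f2_poly: "shift_y f2_poly = f2_poly"
  by (simp add: shift_y_def f2_poly_def pcompose_quadratic_shift char)

lemma shift_y_pcompose_f2 [simp]: "shift_y (pcompose p f2_poly) = pcompose p f2_poly"
  using shift_y_f2_poly by (simp add: shift_y_def pcompose_assoc[symmetric])

lemma degree_f2_poly: "degree f2_poly = 2" and lead_coeff_f2_poly: "lead_coeff f2_poly = 1"
  by (simp_all add: f2_poly_def)

lemma gcd_const: "pcompose (gcd [:\<alpha>:] \<beta>) q = gcd [:\<alpha>:] \<beta>"
  and a_cof_const: "pcompose a_cof q = a_cof"
proof -
  have eq: "a_cof * gcd [:\<alpha>:] \<beta> = [:\<alpha>:]" by (simp add: a_cof_def)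
  then have "a_cof \<noteq> 0" "gcd [:\<alpha>:] \<beta> \<noteq> 0" using \<alpha>_nonzero by auto
  moreover from this have "degree a_cof = 0" "degree (gcd [:\<alpha>:] \<beta>) = 0"
    using degree_mult_eq[of a_cof "gcd [:\<alpha>:] \<beta>"] eq by simp_all
  ultimately show "pcompose (gcd [:\<alpha>:] \<beta>) q = gcd [:\<alpha>:] \<beta>" "pcompose a_cof q = a_cof"
    by (auto elim!: degree_eq_zeroE)
qed

lemma \<beta>2_mult_a_cof: "\<beta>2 * a_cof = [:\<alpha>:] * pcompose b_cof f2_poly"
proof -
  let ?d = "gcd [:\<alpha>:] \<beta>"
  have "\<beta>2 = pcompose (b_cof * ?d) f2_poly" by (simp add: \<beta>2_def b_cof_def)
  also have "\<dots> = pcompose b_cof f2_poly * ?d" by (simp only: pcompose_mult gcd_const)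
  finally have "\<beta>2 = pcompose b_cof f2_poly * ?d" .
  then have "\<beta>2 * a_cof = pcompose b_cof f2_poly * (a_cof * ?d)" by (simp only: ac_simps)
  also have "a_cof * ?d = [:\<alpha>:]" by (simp add: a_cof_def)
  finally show ?thesis by (simp only: ac_simps)
qed

lemma lift2_pcompose_f2_mem: "lift2 (pcompose e f2_poly) \<in> invariant_alg"
proof -
  have "subst4 (lift2 e) varX (lift2 f2_poly) (lift3 f3_poly) (lift3 f4_poly)
      = lift2 (pcompose e f2_poly)"
    by (simp add: subst4_lift2 eval_xy_def eval_x_varX[abs_def] peval_lift1_lift2)
  with gen_alg4_subst4I show ?thesis by metis
qed

lemma coefficient_pair_mem:
  assumes q: "shift_y q = q" and p: "p = shift_y p + \<beta>2 * q"
  shows "lift3 ([:p:] + [:0, 1:] * [:q:]) \<in> invariant_alg"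
proof -
  obtain Q where Q: "q = pcompose Q f2_poly"
    using shift_fixed_imp_pcompose[of \<alpha> q] char \<alpha>_nonzero q
    by (auto simp: shift_y_def f2_poly_def)
  obtain U V where UV: "p = pcompose U f2_poly + [:0, 1:] * pcompose V f2_poly"
    using pcompose_quadratic_decomposition[OF degree_f2_poly lead_coeff_f2_poly] by blast
  have "shift_y p = pcompose U f2_poly + ([:\<alpha>:] + [:0, 1:]) * pcompose V f2_poly"
    unfolding UV is_ring_homD[OF is_ring_hom_shift_y] shift_y_X shift_y_pcompose_f2 ..
  then have "[:\<alpha>:] * pcompose V f2_poly = - (\<beta>2 * q)"
    using p UV by (simp add: algebra_simps eq_neg_iff_add_eq_0)
  then have "pcompose ([:\<alpha>:] * V - \<beta> * Q) f2_poly = 0"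
    using char by (simp add: uminus_CHAR_2 pcompose_diff pcompose_mult pcompose_smult \<beta>2_def Q)
  then have "[:\<alpha>:] * V = \<beta> * Q"
    using pcompose_eq_0 degree_f2_poly by fastforce
  then obtain r where r: "Q = a_cof * r" "V = b_cof * r"
    using gcd_cofactor_solution \<alpha>_nonzero unfolding a_cof_def b_cof_def by (metis pCons_eq_0_iff)
  have "[:p:] + [:0, 1:] * [:q:] = [:pcompose U f2_poly:] + [:pcompose r f2_poly:] * f4_poly"
    by (simp add: UV Q r f4_poly_def pcompose_mult a_cof_const algebra_simps)
  then have "lift3 ([:p:] + [:0, 1:] * [:q:])
      = lift2 (pcompose U f2_poly) + lift2 (pcompose r f2_poly) * lift3 f4_poly"
    by (simp only: is_ring_homD[OF is_ring_hom_lift3] lift3_const)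
  then show ?thesis
    by (simp add: gen_alg4_add gen_alg4_mult gen_alg4_gens lift2_pcompose_f2_mem)
qed

lemma shift_yz_fixed_mem:
  assumes fixed: "shift_yz p = p"
  shows "lift3 p \<in> invariant_alg"
proof -
  have "shift_y \<beta>2 = \<beta>2" by (simp add: \<beta>2_def)
  then obtain P Q where p: "p = pcompose P f3_poly + [:0, 1:] * pcompose Q f3_poly"
      and Q: "map_poly shift_y Q = Q" and P: "P = map_poly shift_y P + smult \<beta>2 Q"
    using shift_fixed_decomposition[of shift_y \<beta>2 p] fixed char is_ring_hom_shift_y shift_y_1
    unfolding shift_yz_def f3_poly_def by auto
  have "pcompose P f3_poly + [:0, 1:] * pcompose Q f3_poly \<in> {e. lift3 e \<in> invariant_alg}"
  proof (rule pcompose_quadratic_mem)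
    fix i
    have "shift_y (coeff Q i) = coeff Q i" "coeff P i = shift_y (coeff P i) + \<beta>2 * coeff Q i"
      using arg_cong[OF Q, of "\<lambda>R. coeff R i"] arg_cong[OF P, of "\<lambda>R. coeff R i"]
      by (simp_all add: coeff_map_poly)
    then have "lift3 ([:coeff P i:] + [:0, 1:] * [:coeff Q i:]) \<in> invariant_alg"
      by (rule coefficient_pair_mem)
    then show "[:coeff P i:] + [:0, 1:] * [:coeff Q i:] \<in> {e. lift3 e \<in> invariant_alg}" by simp
  qed (use gen_alg4_const[of 0] gen_alg4_gens in \<open>simp_all add: const4_0
        is_ring_hom_0[OF is_ring_hom_lift3] is_ring_homD[OF is_ring_hom_lift3] gen_alg4_add gen_alg4_mult\<close>)
  then show ?thesis using p by simp
qed

lemma shift_yz_generators: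
  "shift_yz [:[:[:0, 1:]:]:] = [:[:[:0, 1:]:]:]" "shift_yz [:f2_poly:] = [:f2_poly:]"
  "shift_yz f3_poly = f3_poly" "shift_yz f4_poly = f4_poly"
proof -
  show "shift_yz [:[:[:0, 1:]:]:] = [:[:[:0, 1:]:]:]"
    by (simp add: shift_yz_def shift_y_def map_poly_pCons)
  show "shift_yz [:f2_poly:] = [:f2_poly:]"
    by (simp add: shift_yz_def map_poly_pCons shift_y_f2_poly)
  show "shift_yz f3_poly = f3_poly"
    by (simp add: shift_yz_def f3_poly_def map_poly_pCons shift_y_1 \<beta>2_def
        pcompose_quadratic_shift char)
  let ?b = "pcompose b_cof f2_poly"
  have "shift_y ([:0, 1:] * ?b) = ([:\<alpha>:] + [:0, 1:]) * ?b"
    by (simp only: is_ring_homD[OF is_ring_hom_shift_y] shift_y_X shift_y_pcompose_f2)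
  then have "map_poly shift_y f4_poly = [:([:\<alpha>:] + [:0, 1:]) * ?b, a_cof:]"
    by (simp add: f4_poly_def map_poly_pCons shift_y_def[of a_cof] a_cof_const)
  then have "shift_yz f4_poly = [:([:\<alpha>:] + [:0, 1:]) * ?b + \<beta>2 * a_cof, a_cof:]"
    by (simp add: shift_yz_def pcompose_pCons)
  also have "\<dots> = [:[:0, 1:] * ?b + ([:\<alpha>:] * ?b + [:\<alpha>:] * ?b), a_cof:]"
    unfolding \<beta>2_mult_a_cof by (simp add: algebra_simps)
  also have "\<dots> = f4_poly"
    using char by (simp add: add_self_CHAR_2 f4_poly_def)
  finally show "shift_yz f4_poly = f4_poly" .
qed

lemma lift2_f2_poly: "lift2 f2_poly = varY ^ 2 + lift1 \<alpha> * varY"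
proof -
  have "f2_poly = [:0, 1:] * [:0, 1:] + [:\<alpha>:] * [:0, 1:]" by (simp add: f2_poly_def)
  then show ?thesis
    by (simp only: is_ring_homD[OF is_ring_hom_lift2] lift2_const lift2_X power2_eq_square)
qed

lemma lift3_f3_poly: "lift3 f3_poly = varZ ^ 2 + subst_xy \<beta> (lift2 f2_poly) * varZ"
proof -
  have "f3_poly = [:0, 1:] * [:0, 1:] + [:\<beta>2:] * [:0, 1:]" by (simp add: f3_poly_def)
  then show ?thesis
    by (simp only: is_ring_homD[OF is_ring_hom_lift3] lift3_const lift3_X power2_eq_square
        subst_xy_lift2 \<beta>2_def)
qed

lemma lift3_f4_poly: "lift3 f4_poly = lift2 a_cof * varZ + subst_xy b_cof (lift2 f2_poly) * varY"
proof -
  have "f4_poly = [:[:0, 1:] * pcompose b_cof f2_poly:] + [:0, 1:] * [:a_cof:]"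
    by (simp add: f4_poly_def)
  then show ?thesis
    by (simp only: is_ring_homD[OF is_ring_hom_lift3] is_ring_homD[OF is_ring_hom_lift2]
        lift3_const lift3_X lift2_X subst_xy_lift2 mult.commute add.commute)
qed

lemma fixed_eq_invariant_alg:
  "{f \<in> kxyz. subst4 f varX (lift2 [:\<alpha>, 1:]) (lift3 [:\<beta>2, 1:]) v4 = f} = invariant_alg"
  (is "{f \<in> kxyz. ?T f = f} = _")
proof
  have T_lift3: "?T (lift3 e) = lift3 (shift_yz e)" for e
    by (simp add: subst4_shift_lift3 shift_yz_def shift_y_def[abs_def])
  show "{f \<in> kxyz. ?T f = f} \<subseteq> invariant_alg"
  proof clarify
    fix f assume "f \<in> kxyz" "?T f = f"
    then obtain p where p: "f = lift3 p" by (auto simp: kxyz_def)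
    with \<open>?T f = f\<close> have "lift3 (shift_yz p) = lift3 p" by (simp add: T_lift3)
    then have "shift_yz p = p" by (simp add: lift3_def)
    with p show "f \<in> invariant_alg" using shift_yz_fixed_mem by simp
  qed
  have T_hom: "is_ring_hom ?T" by (rule is_ring_hom_subst4)
  show "invariant_alg \<subseteq> {f \<in> kxyz. ?T f = f}"
  proof (rule gen_alg4_subset)
    show "const4 c \<in> {f \<in> kxyz. ?T f = f}" for c
      by (simp add: kxyz_def const4_eq_lift3 subst4_const4[of c, unfolded const4_eq_lift3])
    have fixed_lift3: "lift3 e \<in> {f \<in> kxyz. ?T f = f}" if "shift_yz e = e" for e
      using that by (simp add: kxyz_def T_lift3)
    show "varX \<in> {f \<in> kxyz. ?T f = f}"
      using fixed_lift3[OF shift_yz_generators(1)] by (simp add: lift3_const lift2_const lift1_X)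
    show "lift2 f2_poly \<in> {f \<in> kxyz. ?T f = f}"
      using fixed_lift3[OF shift_yz_generators(2)] by (simp add: lift3_const)
    show "lift3 f3_poly \<in> {f \<in> kxyz. ?T f = f}" "lift3 f4_poly \<in> {f \<in> kxyz. ?T f = f}"
      using fixed_lift3 shift_yz_generators(3,4) by blast+
  qed (auto simp: is_ring_homD[OF T_hom] intro: kxyz_add kxyz_mult)
qed

end

theorem lemma3:
  fixes \<alpha> :: "'a::field_gcd poly" and \<beta> :: "'a poly poly" and \<gamma> :: "'a R4"
  assumes "CHAR('a) = 2" and "\<alpha> \<noteq> 0" and "\<beta> \<noteq> 0"
  defines "d \<equiv> gcd [:\<alpha>:] \<beta>"
  defines "a \<equiv> [:\<alpha>:] div d"
  defines "b \<equiv> \<beta> div d"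
  defines "f1 \<equiv> varX"
  defines "f2 \<equiv> varY ^ 2 + lift1 \<alpha> * varY"
  defines "f3 \<equiv> varZ ^ 2 + subst_xy \<beta> f2 * varZ"
  defines "f4 \<equiv> lift2 a * varZ + subst_xy b f2 * varY"
  defines "T \<equiv> (\<lambda>f. subst4 f varX (varY + lift1 \<alpha>) (varZ + subst_xy \<beta> f2)
                      (varW + subst4 \<gamma> f1 f2 f3 f4))"
  shows "{f \<in> kxyz. T f = f} = gen_alg4 f1 f2 f3 f4"
proof -
  interpret char2_triangular \<alpha> \<beta> using assms by unfold_locales
  have gens: "f1 = varX" "f2 = lift2 f2_poly" "f3 = lift3 f3_poly" "f4 = lift3 f4_poly"
    by (simp_all add: f1_def f2_def f3_def f4_def a_def b_def d_def a_cof_def b_cof_def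
        lift2_f2_poly lift3_f3_poly lift3_f4_poly)
  have "varY + lift1 \<alpha> = lift2 [:\<alpha>, 1:]"
    by (simp add: lift2_def lift1_def varY_def)
  moreover have "varZ + subst_xy \<beta> f2 = lift3 [:\<beta>2, 1:]"
    unfolding gens subst_xy_lift2 by (simp add: \<beta>2_def lift3_def lift2_def varZ_def)
  ultimately show ?thesis
    unfolding T_def using fixed_eq_invariant_alg by (simp add: gens)
qed

end
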